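(* Let $T=(V,E)$ be a tree on $n$ vertices, let $f=\{i,j\}$ be a pair of vertices with $d_{i,j}=d>1$, let $B=E\cup\{f\}$, and let $N=\mathrm{Min4PC}_T[B,B]$. Then $N$ has $n-1$ negative eigenvalues and exactly one positive eigenvalue.
   Context: $d_{i,j}$ is the distance in $T$ between vertices $i,j$; $\mathcal{V}_2$ is the set of 2-element subsets of $V$ (edges regarded as elements of $\mathcal{V}_2$). $\mathrm{Min4PC}_T$ is the $\binom n2\times\binom n2$ matrix indexed by $\mathcal{V}_2$ whose entry in row $\{i,j\}$, column $\{k,l\}$ is $\min\{d_{i,l}+d_{j,k},\ d_{i,k}+d_{j,l},\ d_{i,j}+d_{k,l}\}$. $M[B,B]$ denotes the principal submatrix with rows and columns indexed by $B$. *)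

theory Defs
  imports "Jordan_Normal_Form.Char_Poly" "HOL-Computational_Algebra.Polynomial"
begin

definition simple_graph :: "'a set \<Rightarrow> 'a set set \<Rightarrow> bool" where
  "simple_graph V E \<longleftrightarrow> finite V \<and> (\<forall>e\<in>E. e \<subseteq> V \<and> card e = 2)"

fun is_walk :: "'a set set \<Rightarrow> 'a list \<Rightarrow> bool" where
  "is_walk E [] = False"
| "is_walk E [x] = True"
| "is_walk E (x # y # xs) = ({x, y} \<in> E \<and> is_walk E (y # xs))"

definition walk_between :: "'a set set \<Rightarrow> 'a \<Rightarrow> 'a \<Rightarrow> 'a list \<Rightarrow> bool" where
  "walk_between E u v xs \<longleftrightarrow> is_walk E xs \<and> hd xs = u \<and> last xs = v"

definition connected_graph :: "'a set \<Rightarrow> 'a set set \<Rightarrow> bool" where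
  "connected_graph V E \<longleftrightarrow> (\<forall>u\<in>V. \<forall>v\<in>V. \<exists>xs. walk_between E u v xs \<and> set xs \<subseteq> V)"

definition is_tree :: "'a set \<Rightarrow> 'a set set \<Rightarrow> bool" where
  "is_tree V E \<longleftrightarrow> simple_graph V E \<and> V \<noteq> {} \<and> connected_graph V E \<and> card E = card V - 1"

definition gdist :: "'a set set \<Rightarrow> 'a \<Rightarrow> 'a \<Rightarrow> nat" where
  "gdist E u v = (LEAST k. \<exists>xs. walk_between E u v xs \<and> length xs = Suc k)"

text \<open>Entry of Min4PC_T in row {i,j}, column {k,l}; independent of the choice of
  orderings of i,j and of k,l by symmetry.\<close>

definition min4pc_entry :: "'a set set \<Rightarrow> 'a set \<Rightarrow> 'a set \<Rightarrow> real" where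
  "min4pc_entry E P Q =
     (let (i, j) = (SOME (i, j). P = {i, j});
          (k, l) = (SOME (k, l). Q = {k, l});
          d = (\<lambda>x y. real (gdist E x y))
      in min (d i l + d j k) (min (d i k + d j l) (d i j + d k l)))"

text \<open>Principal submatrix Min4PC_T[B,B], with B listed via an enumeration
  idx : {0..<m} -> B.\<close>

definition min4pc_submatrix :: "'a set set \<Rightarrow> nat \<Rightarrow> (nat \<Rightarrow> 'a set) \<Rightarrow> real mat" where
  "min4pc_submatrix E m idx = mat m m (\<lambda>(a, b). min4pc_entry E (idx a) (idx b))"

definition num_neg_eigs :: "real mat \<Rightarrow> nat" where
  "num_neg_eigs A = (\<Sum>a\<in>{a. a < 0 \<and> poly (char_poly A) a = 0}. order a (char_poly A))"

definition num_pos_eigs :: "real mat \<Rightarrow> nat" where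
  "num_pos_eigs A = (\<Sum>a\<in>{a. a > 0 \<and> poly (char_poly A) a = 0}. order a (char_poly A))"

end

theory Submission
  imports Defs
begin

text \<open>
  List \<open>B\<close> with the \<open>s = n - 1\<close> edges first and \<open>f = {i, j}\<close> last. In a tree \<open>d(x,y)\<close> has the
  parity of \<open>d(x,r) + d(y,r)\<close>, and this parity argument shows that two distinct edges have entry \<open>2\<close>,
  while an edge has entry \<open>D - 1\<close> or \<open>D + 1\<close> against \<open>f\<close> (\<open>D = d(i,j)\<close>) according to whether it lies on
  the \<open>i\<close>--\<open>j\<close> geodesic, which has exactly \<open>D\<close> edges. So \<open>N\<close> is the bordered matrix
  \<open>[[2(J - I), c], [c\<^sup>T, 0]]\<close>, and a Schur complement computation gives its characteristic polynomial
  \<open>(x + 2)^(s - 2) q(x)\<close> with a monic cubic \<open>q\<close> satisfying \<open>q(0) = -2 s (D - 1)\<^sup>2 < 0\<close> and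
  \<open>q(-2) = 8 D (s - D) \<ge> 0\<close>. Hence \<open>q\<close> has one positive and two negative roots, and \<open>N\<close> has
  \<open>(s - 2) + 2 = n - 1\<close> negative eigenvalues and one positive eigenvalue.
\<close>

section \<open>Walks and graph distance\<close>

lemma is_walk_not_Nil: "is_walk E xs \<Longrightarrow> xs \<noteq> []"
  by (cases xs) auto

lemma is_walk_append_Cons_iff:
  "is_walk E (xs @ y # ys) \<longleftrightarrow> is_walk E (xs @ [y]) \<and> is_walk E (y # ys)"
proof (induction xs)
  case (Cons x xs)
  then show ?case by (cases xs) auto
qed simp

lemma is_walk_rev: "is_walk E xs \<Longrightarrow> is_walk E (rev xs)"
proof (induction xs rule: is_walk.induct)
  case (3 E x y xs)
  then have "is_walk E (rev xs @ [y])" "{y, x} \<in> E" by (simp_all add: insert_commute)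
  then show ?case using is_walk_append_Cons_iff[of E "rev xs" y "[x]"] by simp
qed auto

lemma is_walk_append_tl:
  "is_walk E xs \<Longrightarrow> is_walk E ys \<Longrightarrow> last xs = hd ys \<Longrightarrow> is_walk E (xs @ tl ys)"
proof (induction xs rule: is_walk.induct)
  case (2 E x)
  then have "x # tl ys = ys" using is_walk_not_Nil by (metis last_ConsL list.collapse)
  then show ?case using 2 by simp
qed auto

definition has_walk :: "'a set set \<Rightarrow> 'a \<Rightarrow> 'a \<Rightarrow> nat \<Rightarrow> bool" where
  "has_walk E u v k \<longleftrightarrow> (\<exists>xs. walk_between E u v xs \<and> length xs = Suc k)"

lemma gdist_le: "has_walk E u v k \<Longrightarrow> gdist E u v \<le> k"
  unfolding gdist_def has_walk_def by (rule Least_le) auto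

lemma has_walk_gdist: "has_walk E u v k \<Longrightarrow> has_walk E u v (gdist E u v)"
  unfolding gdist_def has_walk_def by (rule LeastI) auto

lemma has_walk_refl: "has_walk E u u 0"
  unfolding has_walk_def walk_between_def by (rule exI[of _ "[u]"]) simp

lemma has_walk_edge: "{u, v} \<in> E \<Longrightarrow> has_walk E u v 1"
  unfolding has_walk_def walk_between_def by (rule exI[of _ "[u, v]"]) simp

lemma has_walk_0_eq: "has_walk E u v 0 \<Longrightarrow> u = v"
  unfolding has_walk_def walk_between_def by (auto simp: length_Suc_conv)

lemma has_walk_sym: "has_walk E u v k \<Longrightarrow> has_walk E v u k"
  unfolding has_walk_def walk_between_def
  by (metis is_walk_rev hd_rev last_rev length_rev)

lemma has_walk_trans:
  assumes "has_walk E u v k" "has_walk E v w l"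
  shows "has_walk E u w (k + l)"
proof -
  obtain xs where xs: "is_walk E xs" "hd xs = u" "last xs = v" "length xs = Suc k"
    using assms(1) unfolding has_walk_def walk_between_def by blast
  obtain ys where ys: "is_walk E ys" "hd ys = v" "last ys = w" "length ys = Suc l"
    using assms(2) unfolding has_walk_def walk_between_def by blast
  have "xs \<noteq> []" "ys \<noteq> []" using xs ys is_walk_not_Nil by blast+
  moreover have "last (xs @ tl ys) = w"
    using xs ys by (cases ys) auto
  ultimately show ?thesis
    unfolding has_walk_def walk_between_def using xs ys is_walk_append_tl[of E xs ys]
    by (intro exI[of _ "xs @ tl ys"]) simp
qed

lemma has_walk_SucE:
  assumes "has_walk E u v (Suc k)"
  obtains w where "{u, w} \<in> E" "has_walk E w v k"
proof -
  obtain xs where xs: "is_walk E xs" "hd xs = u" "last xs = v" "length xs = Suc (Suc k)"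
    using assms unfolding has_walk_def walk_between_def by blast
  then obtain w ys where "xs = u # w # ys" by (auto simp: length_Suc_conv)
  then show ?thesis
    using xs by (intro that[of w]) (auto simp: has_walk_def walk_between_def intro!: exI[of _ "w # ys"])
qed

lemma gdist_sym: "gdist E u v = gdist E v u"
  unfolding gdist_def has_walk_def[symmetric] by (metis has_walk_sym)

lemma gdist_self [simp]: "gdist E u u = 0"
  using gdist_le[OF has_walk_refl] by simp

section \<open>Trees\<close>

locale tree =
  fixes V :: "'a set" and E :: "'a set set"
  assumes is_tree: "is_tree V E"
begin

lemma finite_V: "finite V"
  using is_tree by (simp add: is_tree_def simple_graph_def)

lemma card_V: "card V = Suc (card E)"
proof -
  have "card V \<noteq> 0" using is_tree finite_V by (simp add: is_tree_def)
  then show ?thesis using is_tree by (simp add: is_tree_def)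
qed

lemma edgeE:
  assumes "e \<in> E"
  obtains a b where "e = {a, b}" "a \<in> V" "b \<in> V" "a \<noteq> b"
  using assms is_tree unfolding is_tree_def simple_graph_def by (metis card_2_iff insert_subset)

lemma edge_vertices:
  assumes "{u, w} \<in> E"
  shows "u \<in> V" "w \<in> V" "u \<noteq> w"
  using edgeE[OF assms] by (metis doubleton_eq_iff)+

lemma finite_E: "finite E"
proof -
  have "E \<subseteq> Pow V" by (auto elim: edgeE)
  then show ?thesis using finite_V by (meson finite_Pow_iff finite_subset)
qed

lemma has_shortest_walk:
  assumes "u \<in> V" "v \<in> V"
  shows "has_walk E u v (gdist E u v)"
proof -
  obtain xs where "walk_between E u v xs"
    using is_tree assms unfolding is_tree_def connected_graph_def by blast
  then have "has_walk E u v (length xs - 1)"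
    unfolding has_walk_def using is_walk_not_Nil[of E xs] by (auto simp: walk_between_def)
  then show ?thesis by (rule has_walk_gdist)
qed

lemma gdist_eq_0_iff: "u \<in> V \<Longrightarrow> v \<in> V \<Longrightarrow> gdist E u v = 0 \<longleftrightarrow> u = v"
  using has_shortest_walk has_walk_0_eq by fastforce

lemma gdist_triangle:
  "u \<in> V \<Longrightarrow> v \<in> V \<Longrightarrow> w \<in> V \<Longrightarrow> gdist E u w \<le> gdist E u v + gdist E v w"
  by (meson gdist_le has_shortest_walk has_walk_trans)

lemma gdist_edge: "{u, v} \<in> E \<Longrightarrow> gdist E u v = 1"
  using gdist_le[OF has_walk_edge] gdist_eq_0_iff edge_vertices by (metis le_neq_implies_less less_one)

lemma gdist_SucE:
  assumes "u \<in> V" "v \<in> V" "gdist E u v = Suc k"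
  obtains w where "{u, w} \<in> E" "gdist E w v = k"
proof -
  obtain w where w: "{u, w} \<in> E" "has_walk E w v k"
    using has_shortest_walk[OF assms(1,2)] assms(3) by (auto elim: has_walk_SucE)
  have "gdist E u v \<le> gdist E u w + gdist E w v"
    using gdist_triangle[OF assms(1) edge_vertices(2)[OF w(1)] assms(2)] .
  then have "gdist E w v = k" using gdist_le[OF w(2)] gdist_edge[OF w(1)] assms(3) by simp
  then show ?thesis using that w(1) by blast
qed

definition parent :: "'a \<Rightarrow> 'a \<Rightarrow> 'a" where
  "parent r v = (SOME w. {v, w} \<in> E \<and> Suc (gdist E w r) = gdist E v r)"

lemma parent_spec:
  assumes "r \<in> V" "v \<in> V" "v \<noteq> r"
  shows "{v, parent r v} \<in> E" "Suc (gdist E (parent r v) r) = gdist E v r"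
proof -
  obtain k where "gdist E v r = Suc k"
    using gdist_eq_0_iff[OF assms(2,1)] assms(3) not0_implies_Suc by blast
  then obtain w where "{v, w} \<in> E" "gdist E w r = k"
    using gdist_SucE[OF assms(2,1)] by blast
  then have "\<exists>w. {v, w} \<in> E \<and> Suc (gdist E w r) = gdist E v r"
    using \<open>gdist E v r = Suc k\<close> by auto
  then have "{v, parent r v} \<in> E \<and> Suc (gdist E (parent r v) r) = gdist E v r"
    unfolding parent_def by (rule someI_ex)
  then show "{v, parent r v} \<in> E" "Suc (gdist E (parent r v) r) = gdist E v r" by auto
qed

definition parent_edge :: "'a \<Rightarrow> 'a \<Rightarrow> 'a set" where
  "parent_edge r v = {v, parent r v}"

lemma inj_on_parent_edge:
  assumes r: "r \<in> V"
  shows "inj_on (parent_edge r) (V - {r})"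
proof (rule inj_onI, rule ccontr)
  fix v w assume v: "v \<in> V - {r}" and w: "w \<in> V - {r}" and "parent_edge r v = parent_edge r w" "v \<noteq> w"
  then have "v = parent r w" "w = parent r v" by (auto simp: parent_edge_def doubleton_eq_iff)
  moreover have "Suc (gdist E (parent r v) r) = gdist E v r" "Suc (gdist E (parent r w) r) = gdist E w r"
    using parent_spec(2)[OF r] v w by auto
  ultimately show False by simp
qed

text \<open>This is where \<open>card E = card V - 1\<close> enters: the injection \<open>parent_edge r\<close> exhausts \<open>E\<close>.\<close>

lemma parent_edge_image: "r \<in> V \<Longrightarrow> parent_edge r ` (V - {r}) = E"
proof -
  assume r: "r \<in> V"
  have "parent_edge r ` (V - {r}) \<subseteq> E" using parent_spec(1)[OF r] by (auto simp: parent_edge_def)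
  moreover have "card (parent_edge r ` (V - {r})) = card E"
    using card_image[OF inj_on_parent_edge[OF r]] card_V r finite_V by simp
  ultimately show ?thesis using finite_E by (simp add: card_subset_eq)
qed

lemma edge_parent_edge_cases:
  assumes "r \<in> V" "{x, y} \<in> E"
  obtains "x \<in> V - {r}" "y = parent r x" | "y \<in> V - {r}" "x = parent r y"
proof -
  have "{x, y} \<in> parent_edge r ` (V - {r})" using parent_edge_image[OF assms(1)] assms(2) by simp
  then obtain v where "{x, y} = {v, parent r v}" "v \<in> V - {r}" unfolding parent_edge_def by (rule imageE)
  then show ?thesis using that by (auto simp: doubleton_eq_iff)
qed

lemma gdist_edge_levels:
  assumes r: "r \<in> V" and e: "{x, y} \<in> E"
  shows "gdist E x r = Suc (gdist E y r) \<or> gdist E y r = Suc (gdist E x r)"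
proof (cases rule: edge_parent_edge_cases[OF r e])
  case 1
  then show ?thesis using parent_spec(2)[OF r, of x] by simp
next
  case 2
  then show ?thesis using parent_spec(2)[OF r, of y] by simp
qed

lemma parent_unique:
  assumes r: "r \<in> V" and e: "{v, u} \<in> E" and d: "Suc (gdist E u r) = gdist E v r"
  shows "u = parent r v"
proof (cases rule: edge_parent_edge_cases[OF r e])
  case 2
  then show ?thesis using parent_spec(2)[OF r, of u] d by simp
qed simp

lemma even_gdist_sum:
  assumes r: "r \<in> V"
  shows "x \<in> V \<Longrightarrow> y \<in> V \<Longrightarrow> even (gdist E x y + gdist E x r + gdist E y r)"
proof (induction "gdist E x y" arbitrary: x)
  case 0
  then show ?case using gdist_eq_0_iff by simp
next
  case (Suc k)
  obtain w where w: "{x, w} \<in> E" "gdist E w y = k"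
    using gdist_SucE[OF Suc.prems Suc.hyps(2)[symmetric]] by blast
  have "even (gdist E w y + gdist E w r + gdist E y r)"
    using Suc.hyps(1)[of w] w(2) edge_vertices(2)[OF w(1)] Suc.prems(2) by simp
  then show ?case using gdist_edge_levels[OF r w(1)] Suc.hyps(2) w(2) by presburger
qed

lemma exists_vertex_between:
  assumes x: "x \<in> V" and y: "y \<in> V"
  shows "t \<le> gdist E x y \<Longrightarrow> \<exists>z\<in>V. gdist E x z = t \<and> gdist E z y = gdist E x y - t"
proof (induction t)
  case (Suc t)
  then obtain z where z: "z \<in> V" "gdist E x z = t" "gdist E z y = gdist E x y - t" by auto
  have "gdist E z y = Suc (gdist E x y - Suc t)" using z(3) Suc.prems by simp
  then obtain w where w: "{z, w} \<in> E" "gdist E w y = gdist E x y - Suc t"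
    using gdist_SucE[OF z(1) y] by blast
  have wV: "w \<in> V" using edge_vertices[OF w(1)] by simp
  have "gdist E x w \<le> gdist E x z + gdist E z w" by (rule gdist_triangle[OF x z(1) wV])
  moreover have "gdist E x y \<le> gdist E x w + gdist E w y" by (rule gdist_triangle[OF x wV y])
  ultimately have "gdist E x w = Suc t" using z(2) w Suc.prems gdist_edge[OF w(1)] by linarith
  then show ?case using wV w(2) by blast
qed (use x in force)

end

section \<open>Min4PC entries in a tree\<close>

definition four_point_min :: "'a set set \<Rightarrow> 'a \<Rightarrow> 'a \<Rightarrow> 'a \<Rightarrow> 'a \<Rightarrow> nat" where
  "four_point_min E a b c e =
     min (gdist E a e + gdist E b c) (min (gdist E a c + gdist E b e) (gdist E a b + gdist E c e))"

lemma four_point_min_swap_left: "four_point_min E b a c e = four_point_min E a b c e"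
  unfolding four_point_min_def by (simp add: gdist_sym[of E b a] add.commute min.commute min.left_commute)

lemma four_point_min_swap_right: "four_point_min E a b e c = four_point_min E a b c e"
  unfolding four_point_min_def by (simp add: gdist_sym[of E e c] add.commute min.commute min.left_commute)

lemma four_point_min_commute: "four_point_min E c e a b = four_point_min E a b c e"
  unfolding four_point_min_def
  by (simp add: gdist_sym[of E c b] gdist_sym[of E e a] gdist_sym[of E c a] gdist_sym[of E e b]
      add.commute min.commute min.left_commute)

lemma some_doubleton_cases:
  assumes "P = {a, b}"
  obtains "(SOME (x, y). P = {x, y}) = (a, b)" | "(SOME (x, y). P = {x, y}) = (b, a)"
proof -
  obtain x y where xy: "(SOME (x, y). P = {x, y}) = (x, y)" by (cases "SOME (x, y). P = {x, y}") auto
  have "(\<lambda>(x, y). P = {x, y}) (SOME p. (\<lambda>(x, y). P = {x, y}) p)"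
    by (rule someI[of _ "(a, b)"]) (simp add: assms)
  then have "P = {x, y}" using xy by simp
  then show ?thesis using that xy assms by (auto simp: doubleton_eq_iff)
qed

lemma min4pc_entry_doubleton: "min4pc_entry E {a, b} {c, e} = real (four_point_min E a b c e)"
proof -
  have unfold: "min4pc_entry E {a, b} {c, e} = real (four_point_min E x y z w)"
    if "(SOME (x, y). {a, b} = {x, y}) = (x, y)" "(SOME (x, y). {c, e} = {x, y}) = (z, w)" for x y z w
    unfolding min4pc_entry_def four_point_min_def Let_def using that by (simp add: min_def)
  show ?thesis
    by (rule some_doubleton_cases[of "{a, b}" a b]; rule some_doubleton_cases[of "{c, e}" c e])
      (auto dest!: unfold simp: four_point_min_swap_left four_point_min_swap_right)
qed

context tree
begin

lemma even_gdist_across_edges: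
  assumes ab: "{a, b} \<in> E" and cg: "{c, g} \<in> E"
  shows "even (gdist E a c + gdist E b g)"
proof -
  have V: "a \<in> V" "b \<in> V" "c \<in> V" "g \<in> V" using edge_vertices ab cg by auto
  have "even (gdist E b g + gdist E b a + gdist E g a)" by (rule even_gdist_sum[OF V(1,2,4)])
  moreover have "gdist E b a = 1" using gdist_edge[OF ab] gdist_sym[of E a b] by simp
  moreover have "gdist E c a = Suc (gdist E g a) \<or> gdist E g a = Suc (gdist E c a)"
    by (rule gdist_edge_levels[OF V(1) cg])
  ultimately show ?thesis using gdist_sym[of E a c] by presburger
qed

lemma min4pc_entry_edge_self: "e \<in> E \<Longrightarrow> min4pc_entry E e e = 0"
  by (elim edgeE) (simp add: min4pc_entry_doubleton four_point_min_def)

lemma min4pc_entry_distinct_edges: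
  assumes e: "e \<in> E" and e': "e' \<in> E" and ne: "e \<noteq> e'"
  shows "min4pc_entry E e e' = 2"
proof -
  obtain a b where ab: "e = {a, b}" "a \<in> V" "b \<in> V" using edgeE[OF e] by metis
  obtain c g where cg: "e' = {c, g}" "c \<in> V" "g \<in> V" using edgeE[OF e'] by metis
  have "gdist E a g + gdist E b c \<noteq> 0" "gdist E a c + gdist E b g \<noteq> 0"
    using ab cg ne gdist_eq_0_iff by (auto simp: insert_commute)
  moreover have "even (gdist E a g + gdist E b c)" "even (gdist E a c + gdist E b g)"
    using even_gdist_across_edges e e' ab(1) cg(1) by (auto simp: insert_commute)
  moreover have "gdist E a b = 1" "gdist E c g = 1" using gdist_edge e e' ab(1) cg(1) by auto
  ultimately have "four_point_min E a b c g = 2" unfolding four_point_min_def by presburger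
  then show ?thesis unfolding ab(1) cg(1) min4pc_entry_doubleton by simp
qed

lemma gdist_detour_bounds:
  assumes ab: "{a, b} \<in> E" and i: "i \<in> V" and j: "j \<in> V"
  shows "gdist E i j \<le> gdist E i a + gdist E b j + 1"
    and "odd (gdist E i a + gdist E b j + gdist E i j)"
proof -
  have V: "a \<in> V" "b \<in> V" using edge_vertices[OF ab] by auto
  have "gdist E i j \<le> gdist E i a + gdist E a j" by (rule gdist_triangle[OF i V(1) j])
  moreover have "gdist E a j \<le> gdist E a b + gdist E b j" by (rule gdist_triangle[OF V j])
  ultimately show "gdist E i j \<le> gdist E i a + gdist E b j + 1" using gdist_edge[OF ab] by simp
  have "even (gdist E i a + gdist E i j + gdist E a j)" by (rule even_gdist_sum[OF j i V(1)])
  moreover have "gdist E a j = Suc (gdist E b j) \<or> gdist E b j = Suc (gdist E a j)"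
    by (rule gdist_edge_levels[OF j ab])
  ultimately show "odd (gdist E i a + gdist E b j + gdist E i j)" by presburger
qed

end

locale tree_distant_pair = tree +
  fixes i j :: 'a
  assumes i_in_V: "i \<in> V" and j_in_V: "j \<in> V" and distant: "gdist E i j > 1"
begin

abbreviation D :: nat where "D \<equiv> gdist E i j"

lemma pair_notin_E: "{i, j} \<notin> E"
  using gdist_edge distant by fastforce

lemma min4pc_entry_pair_self: "min4pc_entry E {i, j} {i, j} = 0"
  by (simp add: min4pc_entry_doubleton four_point_min_def)

lemma min4pc_entry_edge_pair: "e \<in> E \<Longrightarrow> min4pc_entry E e {i, j} = min4pc_entry E {i, j} e"
  by (elim edgeE) (simp add: min4pc_entry_doubleton four_point_min_commute)

text \<open>Both detours \<open>i \<dots> a b \<dots> j\<close> and \<open>i \<dots> b a \<dots> j\<close> have length at least \<open>D - 1\<close> and the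
  parity of \<open>D + 1\<close>, so the entry is \<open>D - 1\<close> exactly when the edge lies on the geodesic.\<close>

lemma min4pc_entry_pair_edge:
  assumes e: "{a, b} \<in> E"
  shows "min4pc_entry E {i, j} {a, b} =
    (if gdist E i a + gdist E b j + 1 = D \<or> gdist E i b + gdist E a j + 1 = D then real D - 1 else real D + 1)"
proof -
  have e': "{b, a} \<in> E" using e by (simp add: insert_commute)
  have "gdist E i a + gdist E b j + 1 = D \<or> gdist E i a + gdist E b j \<ge> D + 1"
    using gdist_detour_bounds[OF e i_in_V j_in_V] by presburger
  moreover have "gdist E i b + gdist E a j + 1 = D \<or> gdist E i b + gdist E a j \<ge> D + 1"
    using gdist_detour_bounds[OF e' i_in_V j_in_V] by presburger
  ultimately show ?thesis
    using distant gdist_edge[OF e] gdist_sym[of E j a] gdist_sym[of E j b]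
    unfolding min4pc_entry_doubleton four_point_min_def by (auto simp: min_def)
qed

definition geodesic_vertices :: "'a set" where
  "geodesic_vertices = {a \<in> V. a \<noteq> j \<and> gdist E i a + gdist E a j = D}"

lemma geodesic_vertex_eq_iterated_parent:
  "a \<in> V \<Longrightarrow> gdist E i a + gdist E a j = D \<Longrightarrow> gdist E a j = n \<Longrightarrow> a = (parent i ^^ n) j"
proof (induction n arbitrary: a)
  case 0
  then show ?case using gdist_eq_0_iff j_in_V by simp
next
  case (Suc n)
  obtain w where w: "{a, w} \<in> E" "gdist E w j = n"
    using gdist_SucE[OF Suc.prems(1) j_in_V Suc.prems(3)] by blast
  have wV: "w \<in> V" using edge_vertices[OF w(1)] by simp
  have "gdist E i w \<le> gdist E i a + gdist E a w" by (rule gdist_triangle[OF i_in_V Suc.prems(1) wV])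
  moreover have "D \<le> gdist E i w + gdist E w j" by (rule gdist_triangle[OF i_in_V wV j_in_V])
  ultimately have iw: "gdist E i w = Suc (gdist E i a)"
    using Suc.prems(2,3) w(2) gdist_edge[OF w(1)] by linarith
  then have "w = (parent i ^^ n) j" using Suc.IH[OF wV _ w(2)] Suc.prems(2,3) w(2) by simp
  moreover have "a = parent i w"
    using parent_unique[OF i_in_V] w(1) iw gdist_sym[of E i] by (simp add: insert_commute)
  ultimately show ?case by simp
qed

lemma card_geodesic_vertices: "card geodesic_vertices = D"
proof -
  have "bij_betw (\<lambda>a. gdist E a j) geodesic_vertices {1..D}"
  proof (rule bij_betw_imageI)
    show "inj_on (\<lambda>a. gdist E a j) geodesic_vertices"
      by (rule inj_onI) (metis (mono_tags, lifting) geodesic_vertex_eq_iterated_parent geodesic_vertices_def mem_Collect_eq)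
    have "\<exists>a\<in>geodesic_vertices. gdist E a j = n" if n: "n \<in> {1..D}" for n
    proof -
      obtain z where z: "z \<in> V" "gdist E i z = D - n" "gdist E z j = D - (D - n)"
        using exists_vertex_between[OF i_in_V j_in_V, of "D - n"] by auto
      then have "gdist E z j = n" "z \<noteq> j" using n by auto
      then show ?thesis using z n unfolding geodesic_vertices_def by auto
    qed
    moreover have "gdist E a j \<in> {1..D}" if "a \<in> geodesic_vertices" for a
      using that gdist_eq_0_iff[of a j] j_in_V unfolding geodesic_vertices_def by auto
    ultimately show "(\<lambda>a. gdist E a j) ` geodesic_vertices = {1..D}" by blast
  qed
  then show ?thesis by (simp add: bij_betw_same_card)
qed

lemma geodesic_edge:
  assumes e: "{a, b} \<in> E" and s: "gdist E i a + gdist E b j + 1 = D"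
  shows "a \<in> geodesic_vertices" "b = parent j a"
proof -
  have V: "a \<in> V" "b \<in> V" using edge_vertices[OF e] by auto
  have "gdist E a j \<le> gdist E a b + gdist E b j" by (rule gdist_triangle[OF V j_in_V])
  moreover have "D \<le> gdist E i a + gdist E a j" by (rule gdist_triangle[OF i_in_V V(1) j_in_V])
  ultimately have aj: "gdist E a j = Suc (gdist E b j)" using s gdist_edge[OF e] by linarith
  then show "a \<in> geodesic_vertices" unfolding geodesic_vertices_def using V s by auto
  show "b = parent j a" using parent_unique[OF j_in_V e] aj by simp
qed

definition short_edges :: "'a set set" where
  "short_edges = {e \<in> E. min4pc_entry E {i, j} e = real D - 1}"

lemma short_edges_eq: "short_edges = parent_edge j ` geodesic_vertices"
proof
  show "short_edges \<subseteq> parent_edge j ` geodesic_vertices"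
  proof
    fix e assume e: "e \<in> short_edges"
    then have "e \<in> E" by (simp add: short_edges_def)
    then obtain a b where ab: "e = {a, b}" "{a, b} \<in> E" by (metis edgeE)
    have ba: "{b, a} \<in> E" using ab(2) by (simp add: insert_commute)
    have "min4pc_entry E {i, j} {a, b} = real D - 1" using e ab(1) by (simp add: short_edges_def)
    then have "gdist E i a + gdist E b j + 1 = D \<or> gdist E i b + gdist E a j + 1 = D"
      unfolding min4pc_entry_pair_edge[OF ab(2)] by (auto split: if_splits)
    then show "e \<in> parent_edge j ` geodesic_vertices"
      using geodesic_edge[OF ab(2)] geodesic_edge[OF ba] unfolding ab(1) parent_edge_def
      by (auto simp: insert_commute)
  qed
  show "parent_edge j ` geodesic_vertices \<subseteq> short_edges"
  proof
    fix e assume "e \<in> parent_edge j ` geodesic_vertices"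
    then obtain a where a: "a \<in> geodesic_vertices" "e = {a, parent j a}" by (auto simp: parent_edge_def)
    then have aV: "a \<in> V" "a \<noteq> j" and sa: "gdist E i a + gdist E a j = D"
      unfolding geodesic_vertices_def by auto
    have "{a, parent j a} \<in> E" "Suc (gdist E (parent j a) j) = gdist E a j"
      using parent_spec[OF j_in_V aV] by auto
    then show "e \<in> short_edges"
      using sa a(2) unfolding short_edges_def by (simp add: min4pc_entry_pair_edge)
  qed
qed

lemma card_short_edges: "card short_edges = D"
proof -
  have "inj_on (parent_edge j) geodesic_vertices"
    by (rule inj_on_subset[OF inj_on_parent_edge[OF j_in_V]]) (auto simp: geodesic_vertices_def)
  then show ?thesis unfolding short_edges_eq by (simp add: card_image card_geodesic_vertices)
qed

lemma min4pc_entry_pair_edge_cases: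
  assumes "e \<in> E"
  shows "min4pc_entry E {i, j} e = (if e \<in> short_edges then real D - 1 else real D + 1)"
proof -
  obtain a b where "e = {a, b}" using assms by (metis edgeE)
  then show ?thesis using assms min4pc_entry_pair_edge[of a b] by (simp add: short_edges_def)
qed

end

section \<open>A bordered matrix and its inertia\<close>

lemma det_permute_rows_cols:
  assumes A: "A \<in> carrier_mat n n" and p: "p permutes {0..<n}"
  shows "det (mat n n (\<lambda>(i, j). A $$ (p i, p j))) = det A"
proof -
  define B where "B = mat n n (\<lambda>(i, j). A $$ (i, p j))"
  have B: "B \<in> carrier_mat n n" unfolding B_def by simp
  have pn: "p i < n" if "i < n" for i using permutes_in_image[OF p] that by simp
  have "mat n n (\<lambda>(i, j). A $$ (p i, p j)) = mat n n (\<lambda>(i, j). B $$ (p i, j))"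
    by (rule eq_matI) (auto simp: B_def pn)
  then have "det (mat n n (\<lambda>(i, j). A $$ (p i, p j))) = signof p * det B"
    using det_permute_rows[OF B p] by simp
  also have "transpose_mat B = mat n n (\<lambda>(i, j). transpose_mat A $$ (p i, j))"
    by (rule eq_matI) (use A in \<open>auto simp: B_def pn\<close>)
  then have "det B = signof p * det A"
    using det_transpose[OF B] det_permute_rows[OF transpose_carrier_mat[THEN iffD2, OF A] p]
      det_transpose[OF A] by simp
  finally show ?thesis by (simp add: mult.assoc[symmetric] flip: of_int_mult)
qed

lemma char_poly_permute:
  assumes A: "A \<in> carrier_mat n n" and p: "p permutes {0..<n}"
  shows "char_poly (mat n n (\<lambda>(i, j). A $$ (p i, p j))) = char_poly A"
proof -
  have pn: "p i < n" if "i < n" for i using permutes_in_image[OF p] that by simp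
  have "char_poly_matrix (mat n n (\<lambda>(i, j). A $$ (p i, p j)))
      = mat n n (\<lambda>(i, j). char_poly_matrix A $$ (p i, p j))"
    by (rule eq_matI) (use A pn permutes_inj[OF p] in \<open>auto simp: char_poly_matrix_def inj_eq\<close>)
  then show ?thesis
    unfolding char_poly_def using det_permute_rows_cols[OF char_poly_matrix_closed[OF A] p] by simp
qed

lemma det_unit_upper_triangular:
  fixes A :: "'a :: comm_ring_1 mat"
  assumes "A \<in> carrier_mat n n" "upper_triangular A" "\<And>i. i < n \<Longrightarrow> A $$ (i, i) = 1"
  shows "det A = 1"
  using assms by (simp add: det_upper_triangular prod_list_diag_prod)

lemma sum_if_eq_else_const:
  fixes a b :: "'a :: comm_ring_1"
  assumes "j < s"
  shows "(\<Sum>k\<in>{0..<s}. if k = j then a else b) = a + (of_nat s - 1) * b"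
proof -
  have "(\<Sum>k\<in>{0..<s}. if k = j then a else b) = (\<Sum>k\<in>{0..<s}. (if k = j then a - b else 0) + b)"
    by (rule sum.cong) auto
  also have "\<dots> = (a - b) + of_nat s * b" using assms by (simp add: sum.distrib)
  finally show ?thesis by (simp add: algebra_simps)
qed

text \<open>Adding all rows to the first one and subtracting the first column from the others
  leaves a lower triangular matrix.\<close>

lemma det_const_diag_const_offdiag:
  fixes a b :: "'a :: comm_ring_1"
  assumes s: "s \<ge> 1"
  shows "det (mat s s (\<lambda>(i, j). if i = j then a else b)) = (a - b) ^ (s - 1) * (a + (of_nat s - 1) * b)"
proof -
  define X where "X = mat s s (\<lambda>(i, j). if i = j then a else b)"
  define R where "R = mat s s (\<lambda>(i, j). if i = j \<or> i = 0 then 1 else (0 :: 'a))"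
  define L where "L = mat s s (\<lambda>(i, j). if i = j then 1 else if i = 0 then - 1 else (0 :: 'a))"
  have X: "X \<in> carrier_mat s s" and R: "R \<in> carrier_mat s s" and L: "L \<in> carrier_mat s s"
    unfolding X_def L_def R_def by auto
  have detR: "det R = 1" and detL: "det L = 1"
    by (rule det_unit_upper_triangular[OF R], auto simp: upper_triangular_def R_def)
      (rule det_unit_upper_triangular[OF L], auto simp: upper_triangular_def L_def)
  define W where "W = mat s s (\<lambda>(i, j). if i = 0 then a + (of_nat s - 1) * b else X $$ (i, j))"
  have RX: "R * X = W"
  proof (rule eq_matI)
    fix i j assume "i < dim_row W" "j < dim_col W"
    then have i: "i < s" and j: "j < s" by (auto simp: W_def)
    have "(R * X) $$ (i, j) = (\<Sum>k\<in>{0..<s}. R $$ (i, k) * X $$ (k, j))"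
      using i j R X by (simp add: scalar_prod_def)
    also have "\<dots> = (\<Sum>k\<in>{0..<s}. if i = 0 then (if k = j then a else b) else if k = i then X $$ (i, j) else 0)"
      by (rule sum.cong) (use i j in \<open>auto simp: R_def X_def\<close>)
    finally show "(R * X) $$ (i, j) = W $$ (i, j)" using i j by (simp add: W_def sum_if_eq_else_const)
  qed (auto simp: W_def R_def X_def)
  define Z where "Z = mat s s (\<lambda>(i, j). if j = 0 then W $$ (i, 0) else if i = j then a - b else 0)"
  have WL: "W * L = Z"
  proof (rule eq_matI)
    fix i j assume "i < dim_row Z" "j < dim_col Z"
    then have i: "i < s" and j: "j < s" by (auto simp: Z_def)
    have "(W * L) $$ (i, j) = (\<Sum>k\<in>{0..<s}. W $$ (i, k) * L $$ (k, j))"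
      using i j W_def L by (simp add: scalar_prod_def)
    also have "\<dots> = (\<Sum>k\<in>{0..<s}. (if k = j then W $$ (i, k) else 0) - (if j \<noteq> 0 \<and> k = 0 then W $$ (i, k) else 0))"
      by (rule sum.cong) (use j in \<open>auto simp: L_def\<close>)
    also have "\<dots> = W $$ (i, j) - (if j = 0 then 0 else W $$ (i, 0))"
      using j s by (simp add: sum_subtractf)
    finally show "(W * L) $$ (i, j) = Z $$ (i, j)" using i j by (auto simp: W_def X_def Z_def)
  qed (auto simp: Z_def W_def L_def)
  have "det Z = prod_list (diag_mat Z)"
    by (rule det_lower_triangular[of s]) (auto simp: Z_def)
  also have "diag_mat Z = (a + (of_nat s - 1) * b) # map (\<lambda>_. a - b) [1..<s]"
    using s upt_rec[of 0 s] by (auto simp: diag_mat_def Z_def W_def)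
  finally have "det Z = (a - b) ^ (s - 1) * (a + (of_nat s - 1) * b)" by (simp add: map_replicate_const)
  moreover have "det Z = det R * det X * det L"
    using det_mult[OF R X] det_mult[OF _ L, of "R * X"] R X by (simp flip: WL RX)
  ultimately show ?thesis using detR detL by (simp add: X_def)
qed

lemma det_last_column_elim:
  fixes M :: "'a :: comm_ring_1 mat"
  assumes M: "M \<in> carrier_mat (Suc s) (Suc s)"
    and w: "\<And>i. i < s \<Longrightarrow> (\<Sum>k\<in>{0..<s}. M $$ (i, k) * w k) + M $$ (i, s) = 0"
  shows "det M = ((\<Sum>k\<in>{0..<s}. M $$ (s, k) * w k) + M $$ (s, s)) * det (mat_delete M s s)"
proof -
  define L where "L = mat (Suc s) (Suc s) (\<lambda>(i, j). if i = j then 1 else if j = s then w i else 0)"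
  have L: "L \<in> carrier_mat (Suc s) (Suc s)" unfolding L_def by simp
  have "det L = 1" by (rule det_unit_upper_triangular[OF L]) (auto simp: upper_triangular_def L_def)
  then have "det M = det (M * L)" using det_mult[OF M L] by simp
  have prod_entry: "(M * L) $$ (i, j) = (if j = s then (\<Sum>k\<in>{0..<s}. M $$ (i, k) * w k) + M $$ (i, s) else M $$ (i, j))"
    if "i < Suc s" "j < Suc s" for i j
  proof -
    have "(M * L) $$ (i, j) = (\<Sum>k\<in>{0..<s}. M $$ (i, k) * L $$ (k, j)) + M $$ (i, s) * L $$ (s, j)"
      using that M L by (simp add: scalar_prod_def)
    also have "(\<Sum>k\<in>{0..<s}. M $$ (i, k) * L $$ (k, j))
        = (\<Sum>k\<in>{0..<s}. if j = s then M $$ (i, k) * w k else if k = j then M $$ (i, k) else 0)"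
      by (rule sum.cong) (use that in \<open>auto simp: L_def\<close>)
    finally show ?thesis using that by (auto simp: L_def)
  qed
  have "det (M * L) = (\<Sum>i<Suc s. (M * L) $$ (i, s) * cofactor (M * L) i s)"
    by (rule laplace_expansion_column) (use M L in auto)
  also have "\<dots> = (M * L) $$ (s, s) * det (mat_delete (M * L) s s)"
    by (subst sum.remove[of _ s]) (auto simp: prod_entry w cofactor_def intro!: sum.neutral)
  also have "mat_delete (M * L) s s = mat_delete M s s"
  proof (rule eq_matI)
    fix i j assume "i < dim_row (mat_delete M s s)" "j < dim_col (mat_delete M s s)"
    then have "i < s" "j < s" using M by auto
    then have "mat_delete (M * L) s s $$ (i, j) = (M * L) $$ (i, j)" using M L by (simp add: mat_delete_def)
    also have "\<dots> = M $$ (i, j)" using \<open>i < s\<close> \<open>j < s\<close> by (simp add: prod_entry)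
    finally show "mat_delete (M * L) s s $$ (i, j) = mat_delete M s s $$ (i, j)"
      using \<open>i < s\<close> \<open>j < s\<close> M by (simp add: mat_delete_def)
  qed (use M L in \<open>auto simp: mat_delete_def\<close>)
  finally show ?thesis using \<open>det M = det (M * L)\<close> by (simp add: prod_entry)
qed

lemma poly_char_poly_eq_det:
  fixes A :: "'a :: field mat"
  assumes A: "A \<in> carrier_mat n n"
  shows "poly (char_poly A) x = det (mat n n (\<lambda>(i, j). (if i = j then x else 0) - A $$ (i, j)))"
proof -
  have "- char_matrix A x = mat n n (\<lambda>(i, j). (if i = j then x else 0) - A $$ (i, j))"
    by (rule eq_matI) (use A in \<open>auto simp: char_matrix_def\<close>)
  then show ?thesis using char_poly_matrix[OF A] by simp
qed

text \<open>\<open>Min4PC\<^sub>T[B,B]\<close> with the edges listed first and \<open>{i, j}\<close> last; \<open>c\<close> is the row of \<open>{i, j}\<close>.\<close>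

definition bordered_mat :: "nat \<Rightarrow> (nat \<Rightarrow> real) \<Rightarrow> real mat" where
  "bordered_mat s c = mat (Suc s) (Suc s) (\<lambda>(a, b).
     if a < s \<and> b < s then (if a = b then 0 else 2)
     else if a < s then c a else if b < s then c b else 0)"

lemma bordered_mat_carrier: "bordered_mat s c \<in> carrier_mat (Suc s) (Suc s)"
  by (simp add: bordered_mat_def)

lemma poly_char_poly_bordered_mat:
  fixes c :: "nat \<Rightarrow> real"
  assumes s: "s \<ge> 2" and x1: "x + 2 \<noteq> 0" and x2: "x + 2 - 2 * real s \<noteq> 0"
  defines "S1 \<equiv> \<Sum>k\<in>{0..<s}. c k" and "S2 \<equiv> \<Sum>k\<in>{0..<s}. c k ^ 2"
  shows "poly (char_poly (bordered_mat s c)) x =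
    (x + 2) ^ (s - 2) * ((x + 2) * (x + 2 - 2 * real s) * x - (x + 2 - 2 * real s) * S2 - 2 * S1 ^ 2)"
proof -
  define M where "M = mat (Suc s) (Suc s) (\<lambda>(i, j). (if i = j then x else 0) - bordered_mat s c $$ (i, j))"
  have M: "M \<in> carrier_mat (Suc s) (Suc s)" unfolding M_def by auto
  have M_entry: "M $$ (i, j) = (if i = j then x else 0) -
     (if i < s \<and> j < s then (if i = j then 0 else 2) else if i < s then c i else if j < s then c j else 0)"
    if "i < Suc s" "j < Suc s" for i j
    using that by (simp add: M_def bordered_mat_def)
  \<comment> \<open>\<open>M\<close> maps \<open>(w, 1)\<close> to a multiple of the last unit vector\<close>
  define t where "t = 2 * S1 / (x + 2 - 2 * real s)"
  have t: "t * (x + 2 - 2 * real s) = 2 * S1" unfolding t_def using x2 by simp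
  define w where "w k = (c k + t) / (x + 2)" for k
  have "(\<Sum>k\<in>{0..<s}. M $$ (i, k) * w k) + M $$ (i, s) = 0" if i: "i < s" for i
  proof -
    have "(\<Sum>k\<in>{0..<s}. M $$ (i, k) * w k) = (\<Sum>k\<in>{0..<s}. (if k = i then (x + 2) * w k else 0) - 2 * w k)"
      by (rule sum.cong) (auto simp: M_entry i less_SucI algebra_simps)
    also have "\<dots> = (c i + t) - 2 * (S1 + real s * t) / (x + 2)"
      using i x1 by (simp add: sum_subtractf sum_distrib_left[symmetric] w_def S1_def
          sum_divide_distrib[symmetric] sum.distrib)
    also have "2 * (S1 + real s * t) / (x + 2) = t"
      using x1 t by (simp add: field_simps)
    finally show ?thesis using i by (simp add: M_entry)
  qed
  then have "det M = ((\<Sum>k\<in>{0..<s}. M $$ (s, k) * w k) + M $$ (s, s)) * det (mat_delete M s s)"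
    by (rule det_last_column_elim[OF M])
  also have "(\<Sum>k\<in>{0..<s}. M $$ (s, k) * w k) + M $$ (s, s) = x - (S2 + t * S1) / (x + 2)"
  proof -
    have "(\<Sum>k\<in>{0..<s}. M $$ (s, k) * w k) = - (\<Sum>k\<in>{0..<s}. c k * w k)"
      by (simp add: M_entry sum_negf[symmetric])
    also have "(\<Sum>k\<in>{0..<s}. c k * w k) = (S2 + t * S1) / (x + 2)"
      unfolding w_def S1_def S2_def
      by (simp add: sum_divide_distrib[symmetric] sum.distrib algebra_simps sum_distrib_left power2_eq_square)
    finally show ?thesis by (simp add: M_entry)
  qed
  also have "mat_delete M s s = mat s s (\<lambda>(i, j). if i = j then x else -2)"
    by (rule eq_matI) (use M in \<open>auto simp: mat_delete_def M_entry\<close>)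
  also have "det \<dots> = (x + 2) ^ (s - 1) * (x + 2 - 2 * real s)"
    using det_const_diag_const_offdiag[of s x "-2"] s by (simp add: algebra_simps)
  also have "(x + 2) ^ (s - 1) = (x + 2) ^ (s - 2) * (x + 2)"
    using s by (metis Suc_1 Suc_diff_Suc Suc_le_lessD power_Suc2)
  finally have "det M = (x + 2) ^ (s - 2) * (((x - (S2 + t * S1) / (x + 2)) * (x + 2)) * (x + 2 - 2 * real s))"
    by (simp only: mult_ac)
  also have "(x - (S2 + t * S1) / (x + 2)) * (x + 2) = (x + 2) * x - S2 - t * S1"
    using x1 by (simp add: field_simps)
  also have "((x + 2) * x - S2 - t * S1) * (x + 2 - 2 * real s)
      = (x + 2) * (x + 2 - 2 * real s) * x - (x + 2 - 2 * real s) * S2 - S1 * (t * (x + 2 - 2 * real s))"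
    by (simp add: algebra_simps)
  finally show ?thesis
    unfolding poly_char_poly_eq_det[OF bordered_mat_carrier] M_def[symmetric] t by (simp add: power2_eq_square)
qed

lemma poly_eq_cofinite:
  fixes p q :: "real poly"
  assumes "finite F" and "\<And>x. x \<notin> F \<Longrightarrow> poly p x = poly q x"
  shows "p = q"
proof (rule ccontr)
  assume "p \<noteq> q"
  then have "finite {x. poly (p - q) x = 0}" by (intro poly_roots_finite) simp
  moreover have "UNIV - F \<subseteq> {x. poly (p - q) x = 0}" using assms(2) by auto
  ultimately have "finite (UNIV :: real set)"
    using assms(1) by (metis Diff_infinite_finite finite_subset)
  then show False by (simp add: infinite_UNIV_char_0)
qed

lemma char_poly_bordered_mat:
  fixes c :: "nat \<Rightarrow> real"
  assumes s: "s \<ge> 2"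
  defines "S1 \<equiv> \<Sum>k\<in>{0..<s}. c k" and "S2 \<equiv> \<Sum>k\<in>{0..<s}. c k ^ 2"
  shows "char_poly (bordered_mat s c) = [:2, 1:] ^ (s - 2) *
    [:2 * (real s - 1) * S2 - 2 * S1 ^ 2, 4 - 4 * real s - S2, 4 - 2 * real s, 1:]"
proof (rule poly_eq_cofinite[of "{-2, 2 * real s - 2}"])
  fix x :: real assume "x \<notin> {-2, 2 * real s - 2}"
  then have "x + 2 \<noteq> 0" "x + 2 - 2 * real s \<noteq> 0" by auto
  then show "poly (char_poly (bordered_mat s c)) x = poly ([:2, 1:] ^ (s - 2) *
      [:2 * (real s - 1) * S2 - 2 * S1 ^ 2, 4 - 4 * real s - S2, 4 - 2 * real s, 1:]) x"
    unfolding S1_def S2_def using poly_char_poly_bordered_mat[OF s]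
    by (simp add: algebra_simps power2_eq_square)
qed simp

definition root_count :: "real set \<Rightarrow> real poly \<Rightarrow> nat" where
  "root_count S p = (\<Sum>a\<in>{a \<in> S. poly p a = 0}. order a p)"

lemma num_neg_eigs_root_count: "num_neg_eigs A = root_count {..<0} (char_poly A)"
  unfolding num_neg_eigs_def root_count_def by (simp add: conj_commute)

lemma num_pos_eigs_root_count: "num_pos_eigs A = root_count {0<..} (char_poly A)"
  unfolding num_pos_eigs_def root_count_def by (simp add: conj_commute)

lemma root_count_mult:
  assumes "p \<noteq> 0" "q \<noteq> 0"
  shows "root_count S (p * q) = root_count S p + root_count S q"
proof -
  have pq: "p * q \<noteq> 0" using assms by simp
  let ?R = "\<lambda>p. {a \<in> S. poly p a = 0}"
  have fin: "finite (?R (p * q))"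
    using poly_roots_finite[OF pq] by (rule finite_subset[rotated]) auto
  have "root_count S (p * q) = (\<Sum>a\<in>?R (p * q). order a p) + (\<Sum>a\<in>?R (p * q). order a q)"
    unfolding root_count_def order_mult[OF pq] by (rule sum.distrib)
  also have "(\<Sum>a\<in>?R (p * q). order a p) = root_count S p"
    unfolding root_count_def by (rule sum.mono_neutral_right[OF fin]) (auto simp: order_root)
  also have "(\<Sum>a\<in>?R (p * q). order a q) = root_count S q"
    unfolding root_count_def by (rule sum.mono_neutral_right[OF fin]) (auto simp: order_root)
  finally show ?thesis .
qed

lemma root_count_linear: "root_count S [:- r, 1:] = (if r \<in> S then 1 else 0)"
proof -
  have "{a \<in> S. poly [:- r, 1:] a = 0} = (if r \<in> S then {r} else {})" by auto
  moreover have "order r [:- r, 1:] = 1" using order_power_n_n[of r 1] by simp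
  ultimately show ?thesis unfolding root_count_def by simp
qed

lemma root_count_prod_linear:
  "root_count S (\<Prod>r\<leftarrow>rs. [:- r, 1:]) = length (filter (\<lambda>r. r \<in> S) rs)"
proof (induction rs)
  case Nil
  then show ?case by (simp add: root_count_def)
next
  case (Cons r rs)
  have "(\<Prod>r\<leftarrow>rs. [:- r, 1:]) \<noteq> 0" by auto
  then have "root_count S (\<Prod>x\<leftarrow>r # rs. [:- x, 1:]) = root_count S [:- r, 1:] + root_count S (\<Prod>x\<leftarrow>rs. [:- x, 1:])"
    unfolding list.map prod_list.Cons by (intro root_count_mult) auto
  then show ?case using Cons by (simp add: root_count_linear)
qed

lemma monic_poly_root_above:
  fixes p :: "real poly"
  assumes lc: "lead_coeff p = 1" and a: "poly p a \<le> 0"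
  obtains c g where "c \<ge> a" "p = [:- c, 1:] * g" "lead_coeff g = 1"
proof -
  obtain n where n: "\<forall>x\<ge>n. poly p x \<ge> 1" using poly_pinfty_gt_lc[of p] lc by auto
  obtain c where c: "c \<ge> a" "poly p c = 0"
  proof (cases "poly p a = 0")
    case False
    then have "poly p a < 0" using a by simp
    moreover have "poly p (max n (a + 1)) > 0" using n[rule_format, of "max n (a + 1)"] by simp
    moreover have "a < max n (a + 1)" by (simp add: less_max_iff_disj)
    ultimately obtain c where "a < c" "poly p c = 0"
      using poly_IVT_pos[of a "max n (a + 1)" p] by blast
    then show ?thesis by (intro that) auto
  qed (blast intro: that)
  then obtain g where g: "p = [:- c, 1:] * g" using poly_eq_0_iff_dvd by blast
  have "lead_coeff g = 1" using lc unfolding g lead_coeff_mult by simp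
  then show ?thesis using that c(1) g by blast
qed

lemma monic_linear_poly_eq:
  fixes h :: "'a :: comm_ring_1 poly"
  assumes "degree h = 1" "lead_coeff h = 1"
  shows "h = [:coeff h 0, 1:]"
  using assms by (intro poly_eqI) (auto simp: coeff_pCons coeff_eq_0 split: nat.split)

lemma monic_cubic_split:
  fixes p :: "real poly"
  assumes deg: "degree p = 3" and lc: "lead_coeff p = 1"
    and p0: "poly p 0 < 0" and pm2: "poly p (-2) \<ge> 0"
  obtains c r r' where "p = (\<Prod>x\<leftarrow>[c, r, r']. [:- x, 1:])" "c > 0" "r < 0" "r' < 0"
proof -
  obtain c g where c: "c \<ge> 0" "p = [:- c, 1:] * g" "lead_coeff g = 1"
    using monic_poly_root_above[OF lc] p0 by (metis less_le_not_le)
  have "poly p 0 = - c * poly g 0" by (simp add: c(2))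
  then have "c * poly g 0 > 0" using p0 by simp
  then have "c > 0" "poly g 0 > 0" using c(1) by (auto simp: zero_less_mult_iff)
  have "poly p (-2) = (-2 - c) * poly g (-2)" by (simp add: c(2) algebra_simps)
  then have "poly g (-2) \<le> 0" using pm2 \<open>c > 0\<close> by (simp add: zero_le_mult_iff)
  then obtain r h where r: "r \<ge> -2" "g = [:- r, 1:] * h" "lead_coeff h = 1"
    using monic_poly_root_above[OF c(3)] by blast
  have "g \<noteq> 0" "h \<noteq> 0" using c(3) r(3) by auto
  have "degree p = 1 + degree g" unfolding c(2) by (subst degree_mult_eq) (use \<open>g \<noteq> 0\<close> in auto)
  moreover have "degree g = 1 + degree h" unfolding r(2) by (subst degree_mult_eq) (use \<open>h \<noteq> 0\<close> in auto)
  ultimately have "degree h = 1" using deg by simp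
  define r' where "r' = - coeff h 0"
  have h: "h = [:- r', 1:]" using monic_linear_poly_eq[OF \<open>degree h = 1\<close> r(3)] by (simp add: r'_def)
  have "r * r' > 0" using \<open>poly g 0 > 0\<close> by (simp add: r(2) h mult.commute)
  moreover have "(-2 - r) * (-2 - r') \<le> 0" using \<open>poly g (-2) \<le> 0\<close> by (simp add: r(2) h algebra_simps)
  ultimately have "r < 0" "r' < 0" using r(1) by (auto simp: zero_less_mult_iff mult_le_0_iff)
  then show ?thesis using that[of c r r'] \<open>c > 0\<close> c(2) r(2) h by (simp add: mult.assoc)
qed

lemma square_sum_le_card_mult_sum_squares:
  fixes c :: "'b \<Rightarrow> real"
  shows "(\<Sum>k\<in>A. c k) ^ 2 \<le> real (card A) * (\<Sum>k\<in>A. c k ^ 2)"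
proof -
  have "0 \<le> (\<Sum>k\<in>A. \<Sum>l\<in>A. (c k - c l) ^ 2)" by (intro sum_nonneg) auto
  also have "\<dots> = (\<Sum>k\<in>A. \<Sum>l\<in>A. c k ^ 2) + (\<Sum>k\<in>A. \<Sum>l\<in>A. c l ^ 2) - 2 * (\<Sum>k\<in>A. \<Sum>l\<in>A. c k * c l)"
    by (simp add: power2_diff sum_subtractf sum.distrib sum_distrib_left mult.assoc)
  also have "(\<Sum>k\<in>A. \<Sum>l\<in>A. c k * c l) = (\<Sum>k\<in>A. c k) ^ 2"
    by (simp add: power2_eq_square sum_product)
  also have "(\<Sum>k\<in>A. \<Sum>l\<in>A. c k ^ 2) = real (card A) * (\<Sum>k\<in>A. c k ^ 2)"
    by (simp add: sum_distrib_left mult.commute)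
  also have "(\<Sum>k\<in>A. \<Sum>l\<in>A. c l ^ 2) = real (card A) * (\<Sum>k\<in>A. c k ^ 2)"
    by simp
  finally show ?thesis by simp
qed

lemma bordered_mat_inertia:
  fixes c :: "nat \<Rightarrow> real"
  assumes s: "s \<ge> 2" and gap: "(real s - 1) * (\<Sum>k\<in>{0..<s}. c k ^ 2) < (\<Sum>k\<in>{0..<s}. c k) ^ 2"
  shows "num_neg_eigs (bordered_mat s c) = s \<and> num_pos_eigs (bordered_mat s c) = 1"
proof -
  define S1 where "S1 = (\<Sum>k\<in>{0..<s}. c k)"
  define S2 where "S2 = (\<Sum>k\<in>{0..<s}. c k ^ 2)"
  define q where "q = [:2 * (real s - 1) * S2 - 2 * S1 ^ 2, 4 - 4 * real s - S2, 4 - 2 * real s, 1:]"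
  have "poly q 0 = 2 * ((real s - 1) * S2 - S1 ^ 2)" by (simp add: q_def algebra_simps)
  then have "poly q 0 < 0" using gap by (simp add: S1_def S2_def)
  moreover have "poly q (-2) \<ge> 0"
    using square_sum_le_card_mult_sum_squares[of c "{0..<s}"] by (simp add: q_def S1_def S2_def algebra_simps)
  moreover have "degree q = 3" "lead_coeff q = 1" by (simp_all add: q_def)
  ultimately obtain x r r' where q: "q = (\<Prod>y\<leftarrow>[x, r, r']. [:- y, 1:])" "x > 0" "r < 0" "r' < 0"
    using monic_cubic_split by blast
  have char_poly: "char_poly (bordered_mat s c) = (\<Prod>y\<leftarrow>replicate (s - 2) (-2) @ [x, r, r']. [:- y, 1:])"
    using char_poly_bordered_mat[OF s, of c] q(1) by (simp add: q_def S1_def S2_def)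
  show ?thesis
    unfolding num_neg_eigs_root_count num_pos_eigs_root_count char_poly root_count_prod_linear
    using q(2-4) s by simp
qed

section \<open>The Min4PC submatrix of a tree plus one pair\<close>

lemma bij_betw_move_to_last:
  assumes idx: "bij_betw idx {0..<Suc s} (insert f A)" and f: "f \<notin> A"
  obtains p where "p permutes {0..<Suc s}" "idx (p s) = f" "bij_betw (idx \<circ> p) {0..<s} A"
proof -
  have "f \<in> idx ` {0..<Suc s}" using idx by (simp add: bij_betw_def)
  then obtain k where k: "k < Suc s" "idx k = f" by auto
  define p where "p = Transposition.transpose k s"
  have p: "p permutes {0..<Suc s}" unfolding p_def using k(1) by (intro permutes_swap_id) auto
  have "bij_betw (idx \<circ> p) {0..<Suc s} (insert f A)"
    by (rule bij_betw_trans[OF permutes_imp_bij[OF p] idx])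
  moreover have "idx (p s) = f" using k by (simp add: p_def)
  ultimately have "bij_betw (idx \<circ> p) ({0..<Suc s} - {s}) (insert f A - {f})"
    by (intro bij_betw_DiffI) auto
  then have "bij_betw (idx \<circ> p) {0..<s} A" using f by (simp add: atLeastLessThanSuc)
  with p \<open>idx (p s) = f\<close> show ?thesis using that by blast
qed

context tree_distant_pair
begin

lemma two_le_card_E: "2 \<le> card E"
proof -
  have "short_edges \<subseteq> E" by (auto simp: short_edges_def)
  then have "D \<le> card E" using card_mono[OF finite_E] card_short_edges by metis
  then show ?thesis using distant by simp
qed

lemma char_poly_min4pc_submatrix:
  assumes enum: "bij_betw idx {0..<card (E \<union> {{i, j}})} (E \<union> {{i, j}})"
  obtains h where "bij_betw h {0..<card E} E"
    "char_poly (min4pc_submatrix E (card (E \<union> {{i, j}})) idx)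
       = char_poly (bordered_mat (card E) (\<lambda>k. min4pc_entry E {i, j} (h k)))"
proof -
  define s where "s = card E"
  define f where "f = {i, j}"
  have card_B: "card (E \<union> {f}) = Suc s"
    using pair_notin_E finite_E unfolding s_def f_def by simp
  then have "bij_betw idx {0..<Suc s} (insert f E)" using enum unfolding f_def by simp
  then obtain p where p: "p permutes {0..<Suc s}" "idx (p s) = f" and h: "bij_betw (idx \<circ> p) {0..<s} E"
    using bij_betw_move_to_last pair_notin_E unfolding f_def by metis
  define h where "h = idx \<circ> p"
  have hE: "h a \<in> E" if "a < s" for a using h that by (auto simp: h_def dest: bij_betwE)
  define N where "N = min4pc_submatrix E (Suc s) idx"
  have N: "N \<in> carrier_mat (Suc s) (Suc s)" by (simp add: N_def min4pc_submatrix_def)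
  have "mat (Suc s) (Suc s) (\<lambda>(a, b). N $$ (p a, p b)) = bordered_mat s (\<lambda>a. min4pc_entry E f (h a))"
  proof (rule eq_matI)
    fix a b assume "a < dim_row (bordered_mat s (\<lambda>a. min4pc_entry E f (h a)))"
      "b < dim_col (bordered_mat s (\<lambda>a. min4pc_entry E f (h a)))"
    then have a: "a < Suc s" and b: "b < Suc s" by (auto simp: bordered_mat_def)
    consider "a < s" "b < s" | "a < s" "b = s" | "a = s" "b < s" | "a = s" "b = s"
      using a b by linarith
    then have "min4pc_entry E (h a) (h b) = bordered_mat s (\<lambda>a. min4pc_entry E f (h a)) $$ (a, b)"
    proof cases
      case 1
      moreover have "h a \<noteq> h b" if "a \<noteq> b"
        using that 1 inj_onD[OF bij_betw_imp_inj_on[OF h]] by (auto simp: h_def)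
      ultimately show ?thesis
        using hE by (simp add: bordered_mat_def min4pc_entry_edge_self min4pc_entry_distinct_edges)
    qed (use hE p(2) in \<open>simp_all add: h_def bordered_mat_def f_def min4pc_entry_edge_pair
        min4pc_entry_pair_self\<close>)
    then show "mat (Suc s) (Suc s) (\<lambda>(a, b). N $$ (p a, p b)) $$ (a, b)
        = bordered_mat s (\<lambda>a. min4pc_entry E f (h a)) $$ (a, b)"
      using a b permutes_in_image[OF p(1)] by (simp add: N_def min4pc_submatrix_def h_def)
  qed (auto simp: bordered_mat_def)
  then have "char_poly N = char_poly (bordered_mat s (\<lambda>a. min4pc_entry E f (h a)))"
    using char_poly_permute[OF N p(1)] by simp
  then show ?thesis using that h card_B unfolding N_def s_def f_def h_def by simp
qed

lemma sum_min4pc_entry_pair: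
  assumes h: "bij_betw h {0..<card E} E"
  shows "(\<Sum>k\<in>{0..<card E}. g (min4pc_entry E {i, j} (h k)))
    = real D * g (real D - 1) + real (card E - D) * g (real D + 1)"
proof -
  have short: "short_edges \<subseteq> E" by (auto simp: short_edges_def)
  have "(\<Sum>k\<in>{0..<card E}. g (min4pc_entry E {i, j} (h k))) = (\<Sum>e\<in>E. g (min4pc_entry E {i, j} e))"
    using sum.reindex_bij_betw[OF h, of "\<lambda>e. g (min4pc_entry E {i, j} e)"] by simp
  also have "\<dots> = (\<Sum>e\<in>short_edges. g (min4pc_entry E {i, j} e))
      + (\<Sum>e\<in>E - short_edges. g (min4pc_entry E {i, j} e))"
    using sum.subset_diff[OF short finite_E] by (simp add: add.commute)
  also have "(\<Sum>e\<in>short_edges. g (min4pc_entry E {i, j} e)) = (\<Sum>e\<in>short_edges. g (real D - 1))"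
    by (rule sum.cong) (auto simp: short_edges_def)
  also have "(\<Sum>e\<in>E - short_edges. g (min4pc_entry E {i, j} e)) = (\<Sum>e\<in>E - short_edges. g (real D + 1))"
    by (rule sum.cong) (auto simp: min4pc_entry_pair_edge_cases)
  finally show ?thesis
    using card_short_edges card_Diff_subset[OF finite_subset[OF short finite_E] short] by simp
qed

lemma square_sum_min4pc_entry_pair_gt:
  assumes h: "bij_betw h {0..<card E} E"
  defines "c \<equiv> \<lambda>k. min4pc_entry E {i, j} (h k)"
  shows "(real (card E) - 1) * (\<Sum>k\<in>{0..<card E}. c k ^ 2) < (\<Sum>k\<in>{0..<card E}. c k) ^ 2"
proof -
  define m where "m = card E - D"
  have card_E: "real (card E) = real D + real m"
    using card_mono[OF finite_E, of short_edges] card_short_edges unfolding m_def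
    by (auto simp: short_edges_def)
  have S1: "(\<Sum>k\<in>{0..<card E}. c k) = real D * (real D - 1) + real m * (real D + 1)"
    using sum_min4pc_entry_pair[OF h, of "\<lambda>x. x"] unfolding c_def m_def by simp
  have S2: "(\<Sum>k\<in>{0..<card E}. c k ^ 2) = real D * (real D - 1) ^ 2 + real m * (real D + 1) ^ 2"
    using sum_min4pc_entry_pair[OF h, of "\<lambda>x. x ^ 2"] unfolding c_def m_def by simp
  have "(\<Sum>k\<in>{0..<card E}. c k) ^ 2 - (real (card E) - 1) * (\<Sum>k\<in>{0..<card E}. c k ^ 2)
      = (real D + real m) * (real D - 1) ^ 2"
    unfolding S1 S2 card_E by (simp add: algebra_simps power2_eq_square)
  moreover have "(real D + real m) * (real D - 1) ^ 2 > 0" using distant by simp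
  ultimately show ?thesis by linarith
qed

end

theorem theorem3p1:
  fixes V :: "'a set" and E :: "'a set set" and i j :: 'a and idx :: "nat \<Rightarrow> 'a set"
  assumes tree: "is_tree V E"
    and ij: "i \<in> V" "j \<in> V"
    and d: "gdist E i j > 1"
    and enum: "bij_betw idx {0..<card (E \<union> {{i, j}})} (E \<union> {{i, j}})"
  shows "num_neg_eigs (min4pc_submatrix E (card (E \<union> {{i, j}})) idx) = card V - 1
       \<and> num_pos_eigs (min4pc_submatrix E (card (E \<union> {{i, j}})) idx) = 1"
proof -
  interpret tree_distant_pair V E i j
    using tree ij d by unfold_locales
  obtain h where h: "bij_betw h {0..<card E} E"
    and char_poly: "char_poly (min4pc_submatrix E (card (E \<union> {{i, j}})) idx)
      = char_poly (bordered_mat (card E) (\<lambda>k. min4pc_entry E {i, j} (h k)))"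
    using char_poly_min4pc_submatrix[OF enum] by blast
  have "num_neg_eigs (bordered_mat (card E) (\<lambda>k. min4pc_entry E {i, j} (h k))) = card E
      \<and> num_pos_eigs (bordered_mat (card E) (\<lambda>k. min4pc_entry E {i, j} (h k))) = 1"
    by (rule bordered_mat_inertia[OF two_le_card_E square_sum_min4pc_entry_pair_gt[OF h]])
  then show ?thesis
    unfolding num_neg_eigs_root_count num_pos_eigs_root_count char_poly card_V by simp
qed

end
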